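(* For every $r\ge 3$ and all integers $3\le k_0\le k_1\le \cdots \le k_{r-1}$, \[ S(r;k_0,\dots,k_{r-1}) \ge \Bigl(\prod_{j=2}^{r-1}k_j\Bigr)S(2;k_0,k_1) -\sum_{i=2}^{r-1}\prod_{j=i+1}^{r-1}k_j \] (empty product equal to $1$). In particular, if $4\le s\le t\le k_2\le \cdots \le k_{r-1}$, then \[ S(r;s,t,k_2,\dots,k_{r-1}) \ge \Bigl(\prod_{j=2}^{r-1}k_j\Bigr)(st-t-1) -\sum_{i=2}^{r-1}\prod_{j=i+1}^{r-1}k_j. \]
   Context: For an integer $k\ge 3$, let $\mathcal{L}(k)$ denote the equation $x_1+x_2+\cdots+x_{k-1}=x_k$ in positive integer variables (the $x_i$ need not be distinct). For $N\ge1$, write $[1,N]=\{1,2,\dots,N\}$. For integers $r\ge1$ and $k_0,\dots,k_{r-1}\ge 3$, the generalized Schur number $S(r;k_0,\dots,k_{r-1})$ is the least positive integer $N$ such that for every coloring $\Delta:[1,N]\to\{0,1,\dots,r-1\}$ there exist some $i\in\{0,\dots,r-1\}$ and positive integers $x_1,\dots,x_{k_i}\in[1,N]$ satisfying $\mathcal{L}(k_i)$ with $\Delta(x_1)=\cdots=\Delta(x_{k_i})=i$. *)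

theory Defs
  imports Main
begin

definition mono_sol :: "nat \<Rightarrow> (nat \<Rightarrow> nat) \<Rightarrow> nat \<Rightarrow> nat \<Rightarrow> bool" where
  "mono_sol N \<Delta> i k \<longleftrightarrow>
     (\<exists>x :: nat \<Rightarrow> nat. (\<forall>j\<in>{1..k}. x j \<in> {1..N} \<and> \<Delta> (x j) = i)
                         \<and> (\<Sum>j=1..k-1. x j) = x k)"

definition schur_prop :: "nat \<Rightarrow> (nat \<Rightarrow> nat) \<Rightarrow> nat \<Rightarrow> bool" where
  "schur_prop r k N \<longleftrightarrow>
     (\<forall>\<Delta> :: nat \<Rightarrow> nat. (\<forall>x\<in>{1..N}. \<Delta> x < r) \<longrightarrow> (\<exists>i<r. mono_sol N \<Delta> i (k i)))"

text \<open>Generalized Schur number S(r; k_0, ..., k_{r-1}); only k 0, ..., k (r-1) matter.\<close>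
definition schur :: "nat \<Rightarrow> (nat \<Rightarrow> nat) \<Rightarrow> nat" where
  "schur r k = (LEAST N. 1 \<le> N \<and> schur_prop r k N)"

end

theory Submission
  imports Defs "HOL-Library.Ramsey"
begin

(*
  Let \<Delta> colour [1, m] with colours 0, ..., r-1 and no solution of L(k_i) in colour i, and let
  K = k_r \<ge> k_i.  Colour (m, c] with the new colour r, where c = (K - 1)(m + 1) - 1, and colour
  (c, c + m] by the translate x \<mapsto> \<Delta> (x - c).  A solution in colour r has K - 1 summands
  greater than m, so its sum exceeds c.  A solution in an old colour with total above m has
  exactly one summand above c (two would sum to more than c + m, and without one the sum would
  be at most (k_i - 1) m \<le> c), and subtracting c from that summand and from the total yields a
  \<Delta>-solution in [1, m].  Hence S(r + 1) \<ge> k_r S(r) - 1, and iterating this from S(2),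
  resp. from S(0) = 1, gives both bounds.
*)

definition schur_free_colouring :: "nat \<Rightarrow> (nat \<Rightarrow> nat) \<Rightarrow> nat \<Rightarrow> (nat \<Rightarrow> nat) \<Rightarrow> bool" where
  "schur_free_colouring r k M \<Delta> \<longleftrightarrow>
     (\<forall>x\<in>{1..M}. \<Delta> x < r) \<and> (\<forall>i<r. \<not> mono_sol M \<Delta> i (k i))"

lemma mono_sol_0: "mono_sol N \<Delta> i 0"
  unfolding mono_sol_def by (rule exI[of _ "\<lambda>_. 0"]) simp

lemma not_mono_sol_0:
  assumes "0 < q"
  shows "\<not> mono_sol 0 \<Delta> i q"
proof
  assume "mono_sol 0 \<Delta> i q"
  then obtain x where "\<forall>j\<in>{1..q}. x j \<in> {1..0} \<and> \<Delta> (x j) = i"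
    unfolding mono_sol_def by blast
  moreover have "q \<in> {1..q}"
    using assms by simp
  ultimately have "x q \<in> {1..0}"
    by blast
  then show False
    by simp
qed

lemma mono_sol_mono: "mono_sol N \<Delta> i q \<Longrightarrow> N \<le> M \<Longrightarrow> mono_sol M \<Delta> i q"
  unfolding mono_sol_def by (meson atLeastAtMost_iff order_trans)

lemma sum_diff_telescope_nat:
  fixes f :: "nat \<Rightarrow> nat"
  assumes "mono_on {..n} f"
  shows "(\<Sum>j=1..n. f j - f (j - 1)) = f n - f 0"
  using assms
proof (induction n)
  case (Suc n)
  have "f 0 \<le> f n" "f n \<le> f (Suc n)"
    using Suc.prems by (auto intro: mono_onD)
  moreover have "mono_on {..n} f"
    using Suc.prems by (rule mono_on_subset) auto
  ultimately show ?case
    using Suc.IH by simp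
qed simp

lemma mono_sol_of_clique:
  assumes "finite H" "card H = q" "2 \<le> q" "H \<subseteq> {..N}"
    and clique: "\<And>a b. a \<in> H \<Longrightarrow> b \<in> H \<Longrightarrow> a < b \<Longrightarrow> \<Delta> (b - a) = i"
  shows "mono_sol N \<Delta> i q"
proof -
  define hs where "hs = sorted_list_of_set H"
  have hs: "sorted_wrt (<) hs" "length hs = q" "set hs = H"
    using assms(1,2) by (auto simp: hs_def)
  have diff: "hs ! b - hs ! a \<in> {1..N} \<and> \<Delta> (hs ! b - hs ! a) = i" if "a < b" "b < q" for a b
  proof -
    have "hs ! a < hs ! b" "hs ! a \<in> H" "hs ! b \<in> H"
      using that hs sorted_wrt_nth_less[OF hs(1)] nth_mem[of _ hs] by auto
    then show ?thesis
      using clique assms(4) by auto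
  qed
  define x where "x j = (if j < q then hs ! j - hs ! (j - 1) else hs ! (q - 1) - hs ! 0)" for j
  have "(\<Sum>j=1..q-1. x j) = (\<Sum>j=1..q-1. hs ! j - hs ! (j - 1))"
    by (rule sum.cong) (auto simp: x_def)
  also have "\<dots> = x q"
    using sorted_wrt_nth_less[OF hs(1)] hs(2) assms(3)
    by (subst sum_diff_telescope_nat) (auto simp: x_def mono_on_def le_less)
  finally show ?thesis
    unfolding mono_sol_def
    using diff assms(3) by (intro exI[of _ x]) (auto simp: x_def)
qed

(* Schur's theorem via Ramsey's theorem: colour each pair {a < b} by \<Delta> (b - a). *)
lemma ex_schur_prop:
  assumes "\<forall>i<r. 2 \<le> k i"
  shows "\<exists>N\<ge>1. schur_prop r k N"
proof -
  obtain R :: nat where R: "partn_lst {..<R} (map k [0..<r]) 2"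
    using ramsey_full by blast
  have "schur_prop r k (Suc R)"
    unfolding schur_prop_def
  proof (intro allI impI)
    fix \<Delta> :: "nat \<Rightarrow> nat"
    assume \<Delta>: "\<forall>x\<in>{1..Suc R}. \<Delta> x < r"
    define f where "f S = \<Delta> (Max S - Min S)" for S :: "nat set"
    have f_pair: "f {a, b} = \<Delta> (b - a)" if "a < b" for a b
      using that by (simp add: f_def max_def min_def)
    have "f \<in> nsets {..<R} 2 \<rightarrow> {..<r}"
    proof
      fix S assume "S \<in> nsets {..<R} 2"
      then obtain a b where "S = {a, b}" "a < b" "b < R"
        by (auto simp: ordered_nsets_2_eq)
      then have "b - a \<in> {1..Suc R}"
        unfolding atLeastAtMost_iff by arith
      then show "f S \<in> {..<r}"
        using \<Delta> f_pair \<open>S = {a, b}\<close> \<open>a < b\<close> by simp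
    qed
    moreover have "length (map k [0..<r]) = r"
      by simp
    ultimately obtain i H where "i < length (map k [0..<r])"
      and "H \<in> nsets {..<R} (map k [0..<r] ! i)" and mono: "f ` nsets H 2 \<subseteq> {i}"
      by (rule partn_lstE[OF R])
    then have "i < r" "H \<in> nsets {..<R} (k i)"
      by simp_all
    have "mono_sol (Suc R) \<Delta> i (k i)"
    proof (rule mono_sol_of_clique)
      show "finite H" "card H = k i" "H \<subseteq> {..Suc R}"
        using \<open>H \<in> nsets {..<R} (k i)\<close> by (auto simp: nsets_def)
      show "2 \<le> k i"
        using assms \<open>i < r\<close> by blast
      fix a b assume "a \<in> H" "b \<in> H" "a < b"
      then have "f {a, b} \<in> f ` nsets H 2"
        by simp
      then show "\<Delta> (b - a) = i"
        using mono f_pair[OF \<open>a < b\<close>] by auto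
    qed
    then show "\<exists>i<r. mono_sol (Suc R) \<Delta> i (k i)"
      using \<open>i < r\<close> by blast
  qed
  then show ?thesis
    by (intro exI[of _ "Suc R"]) simp
qed

lemma schur_free_colouring_0:
  assumes "\<forall>i<r. 0 < k i"
  shows "schur_free_colouring r k 0 \<Delta>"
  unfolding schur_free_colouring_def using assms not_mono_sol_0 by auto

lemma less_schur_iff:
  assumes "\<forall>i<r. 2 \<le> k i"
  shows "M < schur r k \<longleftrightarrow> (\<exists>\<Delta>. schur_free_colouring r k M \<Delta>)"
proof
  assume M: "M < schur r k"
  show "\<exists>\<Delta>. schur_free_colouring r k M \<Delta>"
  proof (cases "M = 0")
    case True
    have "\<forall>i<r. 0 < k i"
      using assms by auto
    with True show ?thesis
      using schur_free_colouring_0 by blast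
  next
    case False
    then have "\<not> schur_prop r k M"
      using not_less_Least[OF M[unfolded schur_def]] by simp
    then show ?thesis
      by (auto simp: schur_prop_def schur_free_colouring_def)
  qed
next
  assume "\<exists>\<Delta>. schur_free_colouring r k M \<Delta>"
  then obtain \<Delta> where \<Delta>: "schur_free_colouring r k M \<Delta>" ..
  have "schur_prop r k (schur r k)"
    unfolding schur_def using LeastI_ex[OF ex_schur_prop[OF assms]] by blast
  then show "M < schur r k"
    using \<Delta> mono_sol_mono
    unfolding schur_prop_def schur_free_colouring_def
    by (metis atLeastAtMost_iff le_trans not_le)
qed

lemma schur_0: "schur 0 k = 1"
  unfolding schur_def schur_prop_def by (rule Least_equality) auto

definition block_extension :: "nat \<Rightarrow> nat \<Rightarrow> nat \<Rightarrow> (nat \<Rightarrow> nat) \<Rightarrow> nat \<Rightarrow> nat" where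
  "block_extension r m c \<Delta> x = (if x \<le> m then \<Delta> x else if x \<le> c then r else \<Delta> (x - c))"

lemma block_extension_new_colour:
  assumes \<Delta>: "\<forall>x\<in>{1..m}. \<Delta> x < r" and c: "c < (K - 1) * (m + 1)"
  shows "\<not> mono_sol (c + m) (block_extension r m c \<Delta>) r K"
proof
  assume "mono_sol (c + m) (block_extension r m c \<Delta>) r K"
  then obtain x where x: "\<forall>j\<in>{1..K}. x j \<in> {1..c + m} \<and> block_extension r m c \<Delta> (x j) = r"
    and sum: "(\<Sum>j=1..K-1. x j) = x K"
    unfolding mono_sol_def by blast
  have middle: "m < x j \<and> x j \<le> c" if "j \<in> {1..K}" for j
  proof (rule ccontr)
    assume "\<not> (m < x j \<and> x j \<le> c)"
    then have "x j \<in> {1..m} \<and> \<Delta> (x j) = r \<or> x j - c \<in> {1..m} \<and> \<Delta> (x j - c) = r"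
      using x that by (auto simp: block_extension_def split: if_splits)
    then show False
      using \<Delta> by fastforce
  qed
  have "K \<ge> 2"
    using c by (cases "K - 1") auto
  have "m + 1 \<le> x j" if "j \<in> {1..K-1}" for j
  proof -
    have "j \<in> {1..K}"
      using that by auto
    then show ?thesis
      using middle by (simp add: Suc_le_eq)
  qed
  then have "(K - 1) * (m + 1) \<le> (\<Sum>j=1..K-1. x j)"
    using sum_bounded_below[of "{1..K-1}" "m + 1" x] by simp
  then show False
    using sum middle[of K] c \<open>K \<ge> 2\<close> by simp
qed

lemma single_large_summand:
  fixes x :: "nat \<Rightarrow> nat"
  assumes sum: "(\<Sum>j=1..q-1. x j) = x q" and top: "c < x q" "x q \<le> c + m"
    and gap: "\<forall>j\<in>{1..q-1}. x j \<le> m \<or> c < x j"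
    and "m \<le> c" "(q - 1) * m \<le> c"
  obtains j0 where "j0 \<in> {1..q-1}" "c < x j0" "\<forall>j\<in>{1..q-1} - {j0}. x j \<le> m"
proof -
  have "\<exists>j0\<in>{1..q-1}. c < x j0"
  proof (rule ccontr)
    assume "\<not> ?thesis"
    then have "(\<Sum>j=1..q-1. x j) \<le> (q - 1) * m"
      using gap sum_bounded_above[of "{1..q-1}" x m] by fastforce
    then show False
      using sum top assms(6) by linarith
  qed
  then obtain j0 where j0: "j0 \<in> {1..q-1}" "c < x j0" ..
  have "x j \<le> m" if j: "j \<in> {1..q-1} - {j0}" for j
  proof (rule ccontr)
    assume "\<not> x j \<le> m"
    then have "c < x j"
      using gap j by auto
    moreover have "x j0 + x j \<le> (\<Sum>j=1..q-1. x j)"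
      using sum_mono2[of "{1..q-1}" "{j0, j}" x] j0 j by auto
    ultimately show False
      using sum top j0 \<open>m \<le> c\<close> by linarith
  qed
  then show thesis
    using that j0 by blast
qed

lemma block_extension_old_colour:
  assumes free: "\<not> mono_sol m \<Delta> i q" and "i < r" "m \<le> c" "(q - 1) * m \<le> c"
  shows "\<not> mono_sol (c + m) (block_extension r m c \<Delta>) i q"
proof
  assume "mono_sol (c + m) (block_extension r m c \<Delta>) i q"
  then obtain x where x: "\<forall>j\<in>{1..q}. x j \<in> {1..c + m} \<and> block_extension r m c \<Delta> (x j) = i"
    and sum: "(\<Sum>j=1..q-1. x j) = x q"
    unfolding mono_sol_def by blast
  have "q \<noteq> 0"
    using free mono_sol_0 by metis
  then have q: "q \<in> {1..q}"
    by simp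
  have low: "x j \<in> {1..m} \<and> \<Delta> (x j) = i" if "j \<in> {1..q}" "x j \<le> m" for j
    using x that by (auto simp: block_extension_def)
  have high: "c < x j \<and> x j - c \<in> {1..m} \<and> \<Delta> (x j - c) = i" if "j \<in> {1..q}" "\<not> x j \<le> m" for j
    using x that \<open>i < r\<close> by (auto simp: block_extension_def split: if_splits)
  have "x j \<le> x q" if "j \<in> {1..q}" for j
    using member_le_sum[of j "{1..q-1}" x] that sum by (cases "j = q") auto
  show False
  proof (cases "x q \<le> m")
    case True
    then have "\<forall>j\<in>{1..q}. x j \<in> {1..m} \<and> \<Delta> (x j) = i"
      using low \<open>\<And>j. j \<in> {1..q} \<Longrightarrow> x j \<le> x q\<close> le_trans by blast
    then show False
      using free sum unfolding mono_sol_def by blast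
  next
    case False
    with high[OF q] have top: "c < x q" "x q \<le> c + m"
      by auto
    have "x j \<le> m \<or> c < x j" if "j \<in> {1..q-1}" for j
      using high[of j] that by force
    then obtain j0 where j0: "j0 \<in> {1..q-1}" "c < x j0" and small: "\<forall>j\<in>{1..q-1} - {j0}. x j \<le> m"
      using single_large_summand[OF sum top _ \<open>m \<le> c\<close> \<open>(q - 1) * m \<le> c\<close>] by blast
    define y where "y j = (if j = j0 \<or> j = q then x j - c else x j)" for j
    have "(\<Sum>j\<in>{1..q-1} - {j0}. y j) = (\<Sum>j\<in>{1..q-1} - {j0}. x j)"
      by (rule sum.cong) (auto simp: y_def)
    then have "(\<Sum>j=1..q-1. y j) = y j0 + (\<Sum>j\<in>{1..q-1} - {j0}. x j)"
      using sum.remove[OF _ j0(1), of y] by simp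
    also have "\<dots> = y q"
      using sum.remove[OF _ j0(1), of x] sum j0 top by (simp add: y_def)
    finally have "(\<Sum>j=1..q-1. y j) = y q" .
    moreover have "y j \<in> {1..m} \<and> \<Delta> (y j) = i" if j: "j \<in> {1..q}" for j
    proof (cases "j = j0 \<or> j = q")
      case True
      then have "\<not> x j \<le> m"
        using j0 top \<open>m \<le> c\<close> by auto
      then show ?thesis
        using high[OF j] True by (simp add: y_def)
    next
      case False
      then have "x j \<le> m"
        using small j by auto
      then show ?thesis
        using low[OF j] False by (simp add: y_def)
    qed
    ultimately show False
      using free unfolding mono_sol_def by blast
  qed
qed

lemma schur_free_block_extension:
  assumes free: "schur_free_colouring r k m \<Delta>" and "m \<le> c"
    and "\<forall>i<r. (k i - 1) * m \<le> c" and "c < (k r - 1) * (m + 1)"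
  shows "schur_free_colouring (Suc r) k (c + m) (block_extension r m c \<Delta>)"
  unfolding schur_free_colouring_def
proof (intro conjI ballI allI impI)
  have \<Delta>: "\<forall>x\<in>{1..m}. \<Delta> x < r"
    using free by (simp add: schur_free_colouring_def)
  show "block_extension r m c \<Delta> x < Suc r" if x: "x \<in> {1..c + m}" for x
  proof -
    consider "x \<le> m" | "m < x" "x \<le> c" | "c < x"
      by linarith
    then show ?thesis
    proof cases
      case 1
      with x have "\<Delta> x < r"
        using \<Delta> by auto
      with 1 show ?thesis
        by (simp add: block_extension_def)
    next
      case 2
      then show ?thesis
        by (simp add: block_extension_def)
    next
      case 3
      with x have "x - c \<in> {1..m}"
        by auto
      then have "\<Delta> (x - c) < r"
        using \<Delta> by blast
      with 3 \<open>m \<le> c\<close> show ?thesis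
        by (simp add: block_extension_def)
    qed
  qed
  show "\<not> mono_sol (c + m) (block_extension r m c \<Delta>) i (k i)" if "i < Suc r" for i
  proof (cases "i = r")
    case True
    then show ?thesis
      using block_extension_new_colour[OF \<Delta> \<open>c < (k r - 1) * (m + 1)\<close>] by simp
  next
    case False
    with that have "i < r"
      by simp
    have "\<not> mono_sol m \<Delta> i (k i)"
      using free \<open>i < r\<close> by (simp add: schur_free_colouring_def)
    moreover have "(k i - 1) * m \<le> c"
      using assms(3) \<open>i < r\<close> by blast
    ultimately show ?thesis
      using block_extension_old_colour \<open>i < r\<close> \<open>m \<le> c\<close> by blast
  qed
qed

lemma schur_Suc_ge:
  assumes k2: "\<forall>i\<le>r. 2 \<le> k i" and mono: "\<forall>i<r. k i \<le> k r"
  shows "int (k r) * int (schur r k) - 1 \<le> int (schur (Suc r) k)"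
proof -
  have "\<forall>i<r. 0 < k i"
    using k2 by (metis less_imp_le not_numeral_le_zero gr0I)
  then have "0 < schur r k"
    using less_schur_iff[of r k 0] k2 schur_free_colouring_0 by auto
  then obtain m where S: "schur r k = Suc m"
    using gr0_conv_Suc by blast
  have "2 \<le> k r"
    using k2 by simp
  then obtain L where K: "k r = Suc (Suc L)"
    by (metis add_2_eq_Suc le_Suc_ex)
  obtain \<Delta> where \<Delta>: "schur_free_colouring r k m \<Delta>"
    using less_schur_iff[of r k m] k2 S by auto
  define c where "c = m + L * Suc m" \<comment> \<open>\<open>c = (k r - 1) * schur r k - 1\<close>\<close>
  have "(k i - 1) * m \<le> c" if "i < r" for i
  proof -
    have "(k i - 1) * m \<le> (k r - 1) * m"
      using mono that by (intro mult_le_mono1 diff_le_mono) blast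
    then show ?thesis
      by (simp add: K c_def)
  qed
  then have "schur_free_colouring (Suc r) k (c + m) (block_extension r m c \<Delta>)"
    by (intro schur_free_block_extension[OF \<Delta>]) (simp_all add: K c_def)
  then have "c + m < schur (Suc r) k"
    using less_schur_iff[of "Suc r" k] k2 by (auto simp: less_Suc_eq_le)
  then have "int (c + m) + 1 \<le> int (schur (Suc r) k)"
    by linarith
  then show ?thesis
    by (simp add: S K c_def algebra_simps)
qed

lemma recurrence_lower_bound:
  fixes a c :: "nat \<Rightarrow> int"
  assumes "m \<le> n"
    and "\<And>j. m \<le> j \<Longrightarrow> j < n \<Longrightarrow> 0 \<le> c j"
    and "\<And>j. m \<le> j \<Longrightarrow> j < n \<Longrightarrow> c j * a j - 1 \<le> a (Suc j)"
  shows "(\<Prod>j=m..<n. c j) * a m - (\<Sum>i=m..<n. \<Prod>j=i+1..<n. c j) \<le> a n"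
  using assms(1)
proof (induction rule: dec_induct)
  case base
  then show ?case
    by simp
next
  case (step k)
  have "(\<Sum>i=m..<Suc k. \<Prod>j=i+1..<Suc k. c j) = (\<Sum>i=m..<k. (\<Prod>j=i+1..<k. c j) * c k) + 1"
    using step.hyps(1) by (simp add: sum.cong[OF refl prod.atLeastLessThan_Suc])
  also have "\<dots> = (\<Sum>i=m..<k. \<Prod>j=i+1..<k. c j) * c k + 1"
    by (simp add: sum_distrib_right)
  finally have sum: "(\<Sum>i=m..<Suc k. \<Prod>j=i+1..<Suc k. c j) = (\<Sum>i=m..<k. \<Prod>j=i+1..<k. c j) * c k + 1" .
  have ck: "0 \<le> c k" "c k * a k - 1 \<le> a (Suc k)"
    using step.hyps assms(2,3) by auto
  have "c k * ((\<Prod>j=m..<k. c j) * a m - (\<Sum>i=m..<k. \<Prod>j=i+1..<k. c j)) \<le> c k * a k"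
    using step.IH ck(1) by (rule mult_left_mono)
  moreover have "(\<Prod>j=m..<Suc k. c j) * a m - (\<Sum>i=m..<Suc k. \<Prod>j=i+1..<Suc k. c j)
      = c k * ((\<Prod>j=m..<k. c j) * a m - (\<Sum>i=m..<k. \<Prod>j=i+1..<k. c j)) - 1"
    using step.hyps(1) by (simp add: sum prod.atLeastLessThan_Suc sum_distrib_left algebra_simps)
  ultimately show ?case
    using ck(2) by linarith
qed

lemma schur_2_ge:
  assumes "2 \<le> k 0" and "k 0 \<le> k 1"
  shows "int (k 0) * int (k 1) - int (k 1) - 1 \<le> int (schur 2 k)"
proof -
  have S1: "int (k 0) - 1 \<le> int (schur 1 k)"
    using assms(1) schur_Suc_ge[of 0 k] by (simp add: schur_0)
  have S2: "int (k 1) * int (schur 1 k) - 1 \<le> int (schur 2 k)"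
    using assms schur_Suc_ge[of 1 k] by (simp add: le_Suc_eq numeral_2_eq_2)
  have "int (k 1) * (int (k 0) - 1) \<le> int (k 1) * int (schur 1 k)"
    using S1 by (rule mult_left_mono) simp
  then show ?thesis
    using S2 by (simp add: algebra_simps)
qed

lemma schur_iterated_lower_bound:
  assumes "m \<le> n" and "2 \<le> k 0" and mono: "\<forall>i j. i \<le> j \<and> j < n \<longrightarrow> k i \<le> k j"
  shows "(\<Prod>j=m..<n. int (k j)) * int (schur m k) - (\<Sum>i=m..<n. \<Prod>j=i+1..<n. int (k j))
    \<le> int (schur n k)"
proof (rule recurrence_lower_bound[OF \<open>m \<le> n\<close>])
  have k2: "2 \<le> k i" if "i < n" for i
  proof -
    have "k 0 \<le> k i"
      using mono that by blast
    then show ?thesis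
      using \<open>2 \<le> k 0\<close> by linarith
  qed
  show "int (k j) * int (schur j k) - 1 \<le> int (schur (Suc j) k)" if "j < n" for j
  proof (rule schur_Suc_ge)
    show "\<forall>i\<le>j. 2 \<le> k i"
      using k2 that le_less_trans by blast
    show "\<forall>i<j. k i \<le> k j"
      using mono that less_imp_le by blast
  qed
qed simp

theorem corollary1:
  fixes r :: nat and k :: "nat \<Rightarrow> nat"
  assumes "3 \<le> r" and "3 \<le> k 0"
    and "\<forall>i j. i \<le> j \<and> j < r \<longrightarrow> k i \<le> k j"
  shows "int (schur r k) \<ge>
           (\<Prod>j=2..r-1. int (k j)) * int (schur 2 k)
           - (\<Sum>i=2..r-1. \<Prod>j=i+1..r-1. int (k j))
         \<and> (4 \<le> k 0 \<longrightarrow>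
            int (schur r k) \<ge>
              (\<Prod>j=2..r-1. int (k j)) * (int (k 0) * int (k 1) - int (k 1) - 1)
              - (\<Sum>i=2..r-1. \<Prod>j=i+1..r-1. int (k j)))"
proof -
  have ivl: "{a..r-1} = {a..<r}" for a
    using assms(1) by auto
  have main: "(\<Prod>j=2..<r. int (k j)) * int (schur 2 k) - (\<Sum>i=2..<r. \<Prod>j=i+1..<r. int (k j))
      \<le> int (schur r k)"
    using assms by (intro schur_iterated_lower_bound) simp_all
  have "int (k 0) * int (k 1) - int (k 1) - 1 \<le> int (schur 2 k)"
    using assms by (intro schur_2_ge) simp_all
  then have "(\<Prod>j=2..<r. int (k j)) * (int (k 0) * int (k 1) - int (k 1) - 1)
      \<le> (\<Prod>j=2..<r. int (k j)) * int (schur 2 k)"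
    by (rule mult_left_mono) (simp add: prod_nonneg)
  then show ?thesis
    unfolding ivl using main by linarith
qed

end
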